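(* Let $\mathcal{P}_f$ be a (latent) distribution over functions $f:\mathbb{R}^{n_x}\to\mathbb{R}$, $\mathcal{X}\subset\mathbb{R}^{n_x}$, and $\mathcal{P}_x$ a (latent) distribution on $\mathcal{X}$. Fix $\theta,\phi$, a prior mean function $m_\theta:\mathbb{R}^{n_x}\to\mathbb{R}$, a positive semidefinite prior covariance function $k_\phi:\mathbb{R}^{n_x}\times\mathbb{R}^{n_x}\to\mathbb{R}_{>0}$, a constant $q>0$, and an algorithm $\mathcal{ALG}$ mapping $(m_\theta,k_\phi,\mathcal{D})$ to a posterior mean function and posterior standard deviation function. Let $f^1,\dots,f^n$ be i.i.d. from $\mathcal{P}_f$; for each $i$ let $\mathcal{D}^i_{tr}\sim\mathcal{P}_{\mathcal{D}^i_{tr}\mid f^i}$ be a training dataset of noiseless observations of $f^i$, and $(\mu^i_{\theta,\phi},\sigma^i_\phi)=\mathcal{ALG}(m_\theta,k_\phi,\mathcal{D}^i_{tr})$; and let $x^i_1,\dots,x^i_{t^i_{eval}}$ be i.i.d. from $\mathcal{P}_x$. Define $\mathcal{I}_{\theta,\phi}(x)=[m_\theta(x)-q\sqrt{k_\phi(x,x)},m_\theta(x)+q\sqrt{k_\phi(x,x)}]$, $\mathcal{I}^i_{\theta,\phi}(x)=[\mu^i_{\theta,\phi}(x)-q\sigma^i_\phi(x),\mu^i_{\theta,\phi}(x)+q\sigma^i_\phi(x)]$, $c^i_1(x)=\mathbf{1}[f^i(x)\in\mathcal{I}_{\theta,\phi}(x)]$, $c^i_2(x)=\mathbf{1}[f^i(x)\in\mathcal{I}^i_{\theta,\phi}(x)]$,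 and for $j\in\{1,2\}$ $$C_j=\mathbb{E}_{f^i,x}[c^i_j(x)],\qquad \hat C^i_j=\frac{1}{t^i_{eval}}\sum_{t=1}^{t^i_{eval}}c^i_j(x^i_t).$$ Then for any $\gamma\in(0,0.5]$, each of the following holds with probability at least $1-2\gamma$: $$C_1\geqslant\frac{1}{n}\sum_{i=1}^n\hat C^i_1-\sqrt{\frac{\log(2/\gamma)\sum_{i=1}^n\frac{1}{t^i_{eval}}}{2n^2}}-\sqrt{\frac{\log(2/\gamma)}{2n}},$$ $$C_2\geqslant\frac{1}{n}\sum_{i=1}^n\hat C^i_2-\sqrt{\frac{\log(2/\gamma)\sum_{i=1}^n\frac{1}{t^i_{eval}}}{2n^2}}-\sqrt{\frac{\log(2/\gamma)}{2n}}.$$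
   Context: $\mathbb{E}_{f^i,x}$ denotes expectation with respect to the joint measure of a function $f^i\sim\mathcal{P}_f$ (with its training data and hence posterior generated from it) and an input $x\sim\mathcal{P}_x$; thus $C_1=P_{f^i,x}(f^i(x)\in\mathcal{I}_{\theta,\phi}(x))$ and $C_2=P_{f^i,x}(f^i(x)\in\mathcal{I}^i_{\theta,\phi}(x))$. The probability "with probability at least $1-2\gamma$" is over the random draw of $f^1,\dots,f^n$, their training datasets, and the evaluation inputs $x^i_t$. $\mathbf{1}[\mathcal{E}]$ is the indicator of the event $\mathcal{E}$. *)

theory Defs
  imports "HOL-Probability.Probability"
begin

type_synonym 'n dataset = "((real^'n) \<times> real) list"

definition psd_kernel :: "('a \<Rightarrow> 'a \<Rightarrow> real) \<Rightarrow> bool" where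
  "psd_kernel k \<longleftrightarrow> (\<forall>x y. k x y = k y x) \<and>
     (\<forall>(xs::'a list) (a::nat \<Rightarrow> real).
        (\<Sum>i<length xs. \<Sum>j<length xs. a i * a j * k (xs!i) (xs!j)) \<ge> 0)"

definition prior_interval ::
  "('x \<Rightarrow> real) \<Rightarrow> ('x \<Rightarrow> 'x \<Rightarrow> real) \<Rightarrow> real \<Rightarrow> 'x \<Rightarrow> real set" where
  "prior_interval m k q x = {m x - q * sqrt (k x x) .. m x + q * sqrt (k x x)}"

definition post_interval ::
  "(('x \<Rightarrow> real) \<Rightarrow> ('x \<Rightarrow> 'x \<Rightarrow> real) \<Rightarrow> 'd \<Rightarrow> ('x \<Rightarrow> real) \<times> ('x \<Rightarrow> real))
   \<Rightarrow> ('x \<Rightarrow> real) \<Rightarrow> ('x \<Rightarrow> 'x \<Rightarrow> real) \<Rightarrow> real \<Rightarrow> 'd \<Rightarrow> 'x \<Rightarrow> real set" where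
  "post_interval alg m k q D x =
     (let \<mu> = fst (alg m k D); \<sigma> = snd (alg m k D)
      in {\<mu> x - q * \<sigma> x .. \<mu> x + q * \<sigma> x})"

definition c1 :: "('x \<Rightarrow> real) \<Rightarrow> ('x \<Rightarrow> 'x \<Rightarrow> real) \<Rightarrow> real
     \<Rightarrow> ('x \<Rightarrow> real) \<times> 'd \<Rightarrow> 'x \<Rightarrow> bool" where
  "c1 m k q fD x \<longleftrightarrow> fst fD x \<in> prior_interval m k q x"

definition c2 :: "(('x \<Rightarrow> real) \<Rightarrow> ('x \<Rightarrow> 'x \<Rightarrow> real) \<Rightarrow> 'd \<Rightarrow> ('x \<Rightarrow> real) \<times> ('x \<Rightarrow> real))
     \<Rightarrow> ('x \<Rightarrow> real) \<Rightarrow> ('x \<Rightarrow> 'x \<Rightarrow> real) \<Rightarrow> real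
     \<Rightarrow> ('x \<Rightarrow> real) \<times> 'd \<Rightarrow> 'x \<Rightarrow> bool" where
  "c2 alg m k q fD x \<longleftrightarrow> fst fD x \<in> post_interval alg m k q (snd fD) x"

definition joint_law :: "'f measure \<Rightarrow> ('f \<Rightarrow> 'd measure) \<Rightarrow> 'd measure \<Rightarrow> ('f \<times> 'd) measure" where
  "joint_law Pf Pd Dm = Pf \<bind> (\<lambda>f. distr (Pd f) (Pf \<Otimes>\<^sub>M Dm) (\<lambda>D. (f, D)))"

definition coverage :: "'a measure \<Rightarrow> 'x measure \<Rightarrow> ('a \<Rightarrow> 'x \<Rightarrow> bool) \<Rightarrow> real" where
  "coverage J Px c = measure (J \<Otimes>\<^sub>M Px) {p \<in> space (J \<Otimes>\<^sub>M Px). c (fst p) (snd p)}"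

text \<open>Sample space: for each task i < n, an independent draw of (f^i, D^i) from the
  joint law together with t^i_eval i.i.d. inputs from Px.\<close>
definition sample_space :: "nat \<Rightarrow> (nat \<Rightarrow> nat) \<Rightarrow> 'a measure \<Rightarrow> 'x measure
     \<Rightarrow> (nat \<Rightarrow> 'a \<times> (nat \<Rightarrow> 'x)) measure" where
  "sample_space n T J Px = (\<Pi>\<^sub>M i\<in>{..<n}. J \<Otimes>\<^sub>M (\<Pi>\<^sub>M t\<in>{..<T i}. Px))"

definition emp_avg :: "nat \<Rightarrow> (nat \<Rightarrow> nat) \<Rightarrow> ('a \<Rightarrow> 'x \<Rightarrow> bool)
     \<Rightarrow> (nat \<Rightarrow> 'a \<times> (nat \<Rightarrow> 'x)) \<Rightarrow> real" where
  "emp_avg n T c \<omega> = (1 / real n) * (\<Sum>i<n. (1 / real (T i)) *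
       (\<Sum>t<T i. of_bool (c (fst (\<omega> i)) (snd (\<omega> i) t))))"

definition conf_bound :: "nat \<Rightarrow> (nat \<Rightarrow> nat) \<Rightarrow> real \<Rightarrow> real" where
  "conf_bound n T \<gamma> =
     sqrt (ln (2 / \<gamma>) * (\<Sum>i<n. 1 / real (T i)) / (2 * (real n)\<^sup>2))
     + sqrt (ln (2 / \<gamma>) / (2 * real n))"

end

theory Submission
  imports Defs
begin

text \<open>
  For a single task, \<open>\<hat>C\<^sup>i\<close> averages indicators of the event at pairs
  \<open>(f\<^sup>i, x\<^sup>i\<^sub>t)\<close>, each distributed according to the joint law of \<open>(f, x)\<close>; hence
  \<open>\<hat>C\<^sup>i\<close> is a \<open>[0,1]\<close>-valued random variable with mean \<open>C\<close>, and the \<open>\<hat>C\<^sup>i\<close> are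
  independent across tasks. Nor is any of the Gaussian-process structure; the argument works for every
  measurable coverage event.
\<close>

lemma prob_space_joint_law:
  assumes "prob_space Pf"
    and Pd_kernel: "Pd \<in> Pf \<rightarrow>\<^sub>M subprob_algebra Dm"
    and Pd_prob: "\<And>f. f \<in> space Pf \<Longrightarrow> prob_space (Pd f)"
  shows "prob_space (joint_law Pf Pd Dm)"
proof -
  interpret prob_space Pf by fact
  have "(\<lambda>f. distr (Pd f) (Pf \<Otimes>\<^sub>M Dm) (Pair f)) \<in> Pf \<rightarrow>\<^sub>M subprob_algebra (Pf \<Otimes>\<^sub>M Dm)"
    by (rule measurable_distr2[OF _ Pd_kernel]) simp
  moreover have "prob_space (distr (Pd f) (Pf \<Otimes>\<^sub>M Dm) (Pair f))" if f: "f \<in> space Pf" for f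
  proof -
    have sets_eq: "sets (Pd f) = sets Dm" using Pd_kernel f by (rule subprob_measurableD)
    show ?thesis
      by (rule prob_space.prob_space_distr[OF Pd_prob[OF f]])
        (simp add: measurable_cong_sets[OF sets_eq refl] f)
  qed
  ultimately show ?thesis
    unfolding joint_law_def by (intro prob_space_bind AE_I2)
qed

lemma indep_vars_PiM_components:
  assumes M: "\<And>i. i \<in> I \<Longrightarrow> prob_space (M i)"
  shows "prob_space.indep_vars (\<Pi>\<^sub>M i\<in>I. M i) M (\<lambda>i \<omega>. \<omega> i) I"
proof -
  interpret prob_space "\<Pi>\<^sub>M i\<in>I. M i" using M by (rule prob_space_PiM)
  show ?thesis
  proof (cases "I = {}")
    case False
    have "distr (\<Pi>\<^sub>M i\<in>I. M i) (\<Pi>\<^sub>M i\<in>I. M i) (\<lambda>\<omega>. \<lambda>i\<in>I. \<omega> i)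
        = distr (\<Pi>\<^sub>M i\<in>I. M i) (\<Pi>\<^sub>M i\<in>I. M i) (\<lambda>\<omega>. \<omega>)"
      by (rule distr_cong) (auto simp: space_PiM)
    also have "\<dots> = (\<Pi>\<^sub>M i\<in>I. distr (\<Pi>\<^sub>M i\<in>I. M i) (M i) (\<lambda>\<omega>. \<omega> i))"
      by (auto intro!: PiM_cong distr_PiM_component[symmetric] M)
    finally show ?thesis
      by (subst indep_vars_iff_distr_eq_PiM'[OF False]) auto
  next
    case True
    show ?thesis
      unfolding indep_vars_def2 indep_sets_def by (simp add: True)
  qed
qed

lemma distr_pair_PiM_component:
  assumes M: "\<And>i. i \<in> I \<Longrightarrow> prob_space (M i)" and t: "t \<in> I"
  shows "distr (J \<Otimes>\<^sub>M (\<Pi>\<^sub>M i\<in>I. M i)) (J \<Otimes>\<^sub>M M t) (\<lambda>p. (fst p, snd p t)) = J \<Otimes>\<^sub>M M t"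
proof -
  have component: "distr (\<Pi>\<^sub>M i\<in>I. M i) (M t) (\<lambda>\<omega>. \<omega> t) = M t"
    using M t by (rule distr_PiM_component)
  interpret prob_space "M t" using M t .
  have "distr J J (\<lambda>x. x) \<Otimes>\<^sub>M distr (\<Pi>\<^sub>M i\<in>I. M i) (M t) (\<lambda>\<omega>. \<omega> t)
     = distr (J \<Otimes>\<^sub>M (\<Pi>\<^sub>M i\<in>I. M i)) (J \<Otimes>\<^sub>M M t) (\<lambda>(x, \<omega>). (x, \<omega> t))"
    by (rule pair_measure_distr) (use t component sigma_finite_measure in auto)
  then show ?thesis using component by (simp add: case_prod_beta')
qed

lemma coverage_eq_integral:
  "coverage J Px c = (\<integral>p. of_bool (c (fst p) (snd p)) \<partial>(J \<Otimes>\<^sub>M Px))"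
proof -
  have "coverage J Px c = integral\<^sup>L (J \<Otimes>\<^sub>M Px) (indicator {p \<in> space (J \<Otimes>\<^sub>M Px). c (fst p) (snd p)})"
    by (simp add: coverage_def Int_absorb2)
  also have "\<dots> = (\<integral>p. of_bool (c (fst p) (snd p)) \<partial>(J \<Otimes>\<^sub>M Px))"
    by (rule Bochner_Integration.integral_cong) (auto simp: indicator_def)
  finally show ?thesis .
qed

lemma (in prob_space) Hoeffding_lower_confidence_bound:
  fixes Z :: "'i \<Rightarrow> 'a \<Rightarrow> real"
  assumes fin: "finite I" and nonempty: "I \<noteq> {}"
    and "indep_vars (\<lambda>_. borel) Z I"
    and bounded: "\<And>i. i \<in> I \<Longrightarrow> AE x in M. Z i x \<in> {0..1}"
    and mean: "\<And>i. i \<in> I \<Longrightarrow> expectation (Z i) = \<mu>"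
    and \<delta>: "0 < \<delta>" "\<delta> \<le> 1"
    and \<epsilon>: "sqrt (ln (1 / \<delta>) / (2 * card I)) \<le> \<epsilon>"
  shows "prob {x \<in> space M. \<mu> \<ge> (\<Sum>i\<in>I. Z i x) / card I - \<epsilon>} \<ge> 1 - \<delta>"
proof -
  interpret Hoeffding_ineq M I Z "\<lambda>_. 0" "\<lambda>_. 1" "\<Sum>i\<in>I. expectation (Z i)"
  proof unfold_locales
    show "finite I" "indep_vars (\<lambda>_. borel) Z I" by fact+
    show "AE x in M. Z i x \<in> {0..1}" if "i \<in> I" for i using that by (rule bounded)
  qed
  define n where "n = real (card I)"
  have n: "n > 0" using fin nonempty by (simp add: n_def card_gt_0_iff)
  have \<epsilon>_n: "sqrt (ln (1 / \<delta>) / (2 * n)) \<le> \<epsilon>" using \<epsilon> by (simp add: n_def)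
  have radicand: "0 \<le> ln (1 / \<delta>) / (2 * n)" using \<delta> n by simp
  then have "0 \<le> \<epsilon>" using \<epsilon>_n real_sqrt_ge_zero order_trans by blast
  have "ln (1 / \<delta>) / (2 * n) = (sqrt (ln (1 / \<delta>) / (2 * n)))\<^sup>2" using radicand by simp
  also have "\<dots> \<le> \<epsilon>\<^sup>2" using \<epsilon>_n radicand by (intro power_mono) simp_all
  finally have "ln (1 / \<delta>) \<le> 2 * n * \<epsilon>\<^sup>2" using n by (simp add: field_simps)
  define B where "B = {x \<in> space M. (\<Sum>i\<in>I. Z i x) \<ge> n * \<mu> + n * \<epsilon>}"
  have "prob B \<le> exp (-2 * (n * \<epsilon>)\<^sup>2 / (\<Sum>i\<in>I. (1 - 0)\<^sup>2))"
    unfolding B_def using Hoeffding_ineq_ge[of "n * \<epsilon>"] \<open>0 \<le> \<epsilon>\<close> n mean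
    by (simp add: n_def)
  also have "\<dots> = exp (- (2 * n * \<epsilon>\<^sup>2))"
    using n by (simp add: n_def power2_eq_square)
  also have "\<dots> \<le> exp (- ln (1 / \<delta>))"
    using \<open>ln (1 / \<delta>) \<le> 2 * n * \<epsilon>\<^sup>2\<close> by simp
  also have "\<dots> = \<delta>" using \<delta> by (simp add: exp_minus)
  finally have "prob B \<le> \<delta>" .
  define A where "A = {x \<in> space M. \<mu> \<ge> (\<Sum>i\<in>I. Z i x) / card I - \<epsilon>}"
  have "B \<in> events" "A \<in> events"
    unfolding A_def B_def by measurable
  have "space M - B \<subseteq> A"
    using n by (auto simp: A_def B_def n_def field_simps)
  have "1 - \<delta> \<le> 1 - prob B" using \<open>prob B \<le> \<delta>\<close> by simp
  also have "\<dots> = prob (space M - B)" using \<open>B \<in> events\<close> by (rule prob_compl[symmetric])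
  also have "\<dots> \<le> prob A" using \<open>space M - B \<subseteq> A\<close> \<open>A \<in> events\<close> by (rule finite_measure_mono)
  finally show ?thesis unfolding A_def .
qed

definition emp_coverage :: "nat \<Rightarrow> ('a \<Rightarrow> 'x \<Rightarrow> bool) \<Rightarrow> 'a \<times> (nat \<Rightarrow> 'x) \<Rightarrow> real" where
  "emp_coverage t c p = (1 / real t) * (\<Sum>s<t. of_bool (c (fst p) (snd p s)))"

lemma emp_avg_eq_mean_emp_coverage:
  "emp_avg n T c \<omega> = (\<Sum>i<n. emp_coverage (T i) c (\<omega> i)) / real n"
  by (simp add: emp_avg_def emp_coverage_def)

lemma emp_coverage_in_unit_interval: "emp_coverage t c p \<in> {0..1}"
proof -
  have "(\<Sum>s<t. of_bool (c (fst p) (snd p s))) \<le> real t"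
    using sum_mono[of "{..<t}" "\<lambda>s. of_bool (c (fst p) (snd p s)) :: real" "\<lambda>_. 1"] by simp
  then show ?thesis
    by (cases "t = 0") (auto simp: emp_coverage_def field_simps intro: sum_nonneg)
qed

lemma pred_component_event:
  assumes "{p \<in> space (J \<Otimes>\<^sub>M M s). c (fst p) (snd p)} \<in> sets (J \<Otimes>\<^sub>M M s)" and "s \<in> I"
  shows "Measurable.pred (J \<Otimes>\<^sub>M (\<Pi>\<^sub>M i\<in>I. M i)) (\<lambda>p. c (fst p) (snd p s))"
proof -
  have component: "(\<lambda>p. (fst p, snd p s)) \<in> J \<Otimes>\<^sub>M (\<Pi>\<^sub>M i\<in>I. M i) \<rightarrow>\<^sub>M J \<Otimes>\<^sub>M M s"
    using \<open>s \<in> I\<close> by measurable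
  have "Measurable.pred (J \<Otimes>\<^sub>M M s) (\<lambda>p. c (fst p) (snd p))"
    using assms(1) by (simp add: Measurable.pred_def)
  from measurable_compose[OF component this] show ?thesis by simp
qed

lemma borel_measurable_emp_coverage:
  assumes "{p \<in> space (J \<Otimes>\<^sub>M Px). c (fst p) (snd p)} \<in> sets (J \<Otimes>\<^sub>M Px)"
  shows "emp_coverage t c \<in> borel_measurable (J \<Otimes>\<^sub>M (\<Pi>\<^sub>M s\<in>{..<t}. Px))"
proof -
  note [measurable] = pred_component_event[where M = "\<lambda>_. Px", OF assms]
  show ?thesis unfolding emp_coverage_def by measurable
qed

lemma integral_emp_coverage:
  assumes J: "prob_space J" and Px: "prob_space Px"
    and event: "{p \<in> space (J \<Otimes>\<^sub>M Px). c (fst p) (snd p)} \<in> sets (J \<Otimes>\<^sub>M Px)"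
    and "0 < t"
  shows "(\<integral>p. emp_coverage t c p \<partial>(J \<Otimes>\<^sub>M (\<Pi>\<^sub>M s\<in>{..<t}. Px))) = coverage J Px c"
proof -
  let ?M = "J \<Otimes>\<^sub>M (\<Pi>\<^sub>M s\<in>{..<t}. Px)"
  interpret prob_space ?M using J Px by (intro prob_space_pair prob_space_PiM)
  note [measurable] = pred_component_event[where M = "\<lambda>_. Px", OF event]
  have [measurable]: "Measurable.pred (J \<Otimes>\<^sub>M Px) (\<lambda>p. c (fst p) (snd p))"
    using event by (simp add: Measurable.pred_def)
  have summand: "(\<integral>p. of_bool (c (fst p) (snd p s)) \<partial>?M) = coverage J Px c" if "s < t" for s
  proof -
    have "(\<lambda>p. (fst p, snd p s)) \<in> ?M \<rightarrow>\<^sub>M J \<Otimes>\<^sub>M Px"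
      by measurable (simp add: that)
    from integral_distr[OF this, of "\<lambda>q. of_bool (c (fst q) (snd q)) :: real", symmetric]
    have "(\<integral>p. of_bool (c (fst p) (snd p s)) \<partial>?M)
        = (\<integral>q. (of_bool (c (fst q) (snd q)) :: real) \<partial>distr ?M (J \<Otimes>\<^sub>M Px) (\<lambda>p. (fst p, snd p s)))"
      by simp
    also have "distr ?M (J \<Otimes>\<^sub>M Px) (\<lambda>p. (fst p, snd p s)) = J \<Otimes>\<^sub>M Px"
      using Px that by (intro distr_pair_PiM_component) auto
    finally show ?thesis by (simp add: coverage_eq_integral)
  qed
  have "(\<integral>p. emp_coverage t c p \<partial>?M) = (1 / real t) * (\<Sum>s<t. \<integral>p. of_bool (c (fst p) (snd p s)) \<partial>?M)"
    unfolding emp_coverage_def integral_mult_right_zero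
    by (subst Bochner_Integration.integral_sum) (auto intro!: integrable_const_bound[where B = 1])
  also have "\<dots> = coverage J Px c" using summand \<open>0 < t\<close> by simp
  finally show ?thesis .
qed

lemma coverage_lower_confidence_bound:
  assumes J: "prob_space J" and Px: "prob_space Px"
    and event: "{p \<in> space (J \<Otimes>\<^sub>M Px). c (fst p) (snd p)} \<in> sets (J \<Otimes>\<^sub>M Px)"
    and "0 < n" and T_pos: "\<And>i. i < n \<Longrightarrow> 0 < T i"
    and \<delta>: "0 < \<delta>" "\<delta> \<le> 1"
    and \<epsilon>: "sqrt (ln (1 / \<delta>) / (2 * n)) \<le> \<epsilon>"
  shows "measure (sample_space n T J Px)
           {\<omega> \<in> space (sample_space n T J Px). coverage J Px c \<ge> emp_avg n T c \<omega> - \<epsilon>}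
         \<ge> 1 - \<delta>"
proof -
  define task where "task i = J \<Otimes>\<^sub>M (\<Pi>\<^sub>M s\<in>{..<T i}. Px)" for i
  have sample_space_eq: "sample_space n T J Px = (\<Pi>\<^sub>M i\<in>{..<n}. task i)"
    by (simp add: sample_space_def task_def)
  have task_prob: "prob_space (task i)" for i
    unfolding task_def using J Px by (intro prob_space_pair prob_space_PiM)
  interpret prob_space "sample_space n T J Px"
    unfolding sample_space_eq using task_prob by (rule prob_space_PiM)
  have emp_coverage_measurable: "emp_coverage (T i) c \<in> borel_measurable (task i)" for i
    unfolding task_def using event by (rule borel_measurable_emp_coverage)
  have "indep_vars task (\<lambda>i \<omega>. \<omega> i) {..<n}"
    using indep_vars_PiM_components[of "{..<n}" task] task_prob by (simp add: sample_space_eq)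
  then have "indep_vars (\<lambda>_. borel) (\<lambda>i \<omega>. emp_coverage (T i) c (\<omega> i)) {..<n}"
    by (rule indep_vars_compose2) (rule emp_coverage_measurable)
  moreover have "expectation (\<lambda>\<omega>. emp_coverage (T i) c (\<omega> i)) = coverage J Px c" if "i < n" for i
  proof -
    have "expectation (\<lambda>\<omega>. emp_coverage (T i) c (\<omega> i))
        = (\<integral>p. emp_coverage (T i) c p \<partial>distr (sample_space n T J Px) (task i) (\<lambda>\<omega>. \<omega> i))"
      using that emp_coverage_measurable by (subst integral_distr) (simp_all add: sample_space_eq)
    also have "distr (sample_space n T J Px) (task i) (\<lambda>\<omega>. \<omega> i) = task i"
      unfolding sample_space_eq using task_prob that by (intro distr_PiM_component) auto
    finally show ?thesis
      unfolding task_def using integral_emp_coverage[OF J Px event T_pos[OF that]] by simp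
  qed
  moreover have "AE \<omega> in sample_space n T J Px. emp_coverage (T i) c (\<omega> i) \<in> {0..1}" for i
    by (rule AE_I2) (rule emp_coverage_in_unit_interval)
  ultimately have "prob {\<omega> \<in> space (sample_space n T J Px).
      coverage J Px c \<ge> (\<Sum>i<n. emp_coverage (T i) c (\<omega> i)) / card {..<n} - \<epsilon>} \<ge> 1 - \<delta>"
    using \<open>0 < n\<close> \<delta> \<epsilon>
    by (intro Hoeffding_lower_confidence_bound) auto
  then show ?thesis by (simp add: emp_avg_eq_mean_emp_coverage)
qed

theorem lemma4:
  fixes Pf :: "(real^'n \<Rightarrow> real) measure"
    and Pd :: "(real^'n \<Rightarrow> real) \<Rightarrow> 'n dataset measure"
    and Dm :: "'n dataset measure"
    and Px :: "(real^'n) measure"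
    and Xset :: "(real^'n) set"
    and m :: "real^'n \<Rightarrow> real"
    and k :: "real^'n \<Rightarrow> real^'n \<Rightarrow> real"
    and q :: real
    and alg :: "(real^'n \<Rightarrow> real) \<Rightarrow> (real^'n \<Rightarrow> real^'n \<Rightarrow> real) \<Rightarrow> 'n dataset
                 \<Rightarrow> (real^'n \<Rightarrow> real) \<times> (real^'n \<Rightarrow> real)"
    and n :: nat and T :: "nat \<Rightarrow> nat" and \<gamma> :: real
  assumes Pf: "prob_space Pf"
    and Pd_kernel: "Pd \<in> Pf \<rightarrow>\<^sub>M subprob_algebra Dm"
    and Pd_prob: "\<And>f. f \<in> space Pf \<Longrightarrow> prob_space (Pd f)"
    and noiseless: "\<And>f. f \<in> space Pf \<Longrightarrow> AE D in Pd f. \<forall>(x, y) \<in> set D. y = f x"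
    and Px: "prob_space Px" and Px_borel: "sets Px = sets borel"
    and Xset: "Xset \<in> sets borel" and Px_on_X: "emeasure Px Xset = 1"
    and k_psd: "psd_kernel k" and k_pos: "\<And>x y. k x y > 0"
    and q_pos: "q > 0"
    and c1_meas: "{p \<in> space (joint_law Pf Pd Dm \<Otimes>\<^sub>M Px). c1 m k q (fst p) (snd p)}
                    \<in> sets (joint_law Pf Pd Dm \<Otimes>\<^sub>M Px)"
    and c2_meas: "{p \<in> space (joint_law Pf Pd Dm \<Otimes>\<^sub>M Px). c2 alg m k q (fst p) (snd p)}
                    \<in> sets (joint_law Pf Pd Dm \<Otimes>\<^sub>M Px)"
    and n_pos: "n \<ge> 1" and T_pos: "\<And>i. i < n \<Longrightarrow> T i \<ge> 1"
    and \<gamma>: "0 < \<gamma>" "\<gamma> \<le> 1/2"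
  shows "(measure (sample_space n T (joint_law Pf Pd Dm) Px)
           {\<omega> \<in> space (sample_space n T (joint_law Pf Pd Dm) Px).
              coverage (joint_law Pf Pd Dm) Px (c1 m k q)
                \<ge> emp_avg n T (c1 m k q) \<omega> - conf_bound n T \<gamma>} \<ge> 1 - 2 * \<gamma>) \<and>
         (measure (sample_space n T (joint_law Pf Pd Dm) Px)
           {\<omega> \<in> space (sample_space n T (joint_law Pf Pd Dm) Px).
              coverage (joint_law Pf Pd Dm) Px (c2 alg m k q)
                \<ge> emp_avg n T (c2 alg m k q) \<omega> - conf_bound n T \<gamma>} \<ge> 1 - 2 * \<gamma>)"
proof -
  have J: "prob_space (joint_law Pf Pd Dm)"
    using Pf Pd_kernel Pd_prob by (rule prob_space_joint_law)
  have n: "0 < n" and T: "\<And>i. i < n \<Longrightarrow> 0 < T i"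
    using n_pos T_pos by (auto simp: Suc_le_eq)
  have \<delta>: "0 < \<gamma> / 2" "\<gamma> / 2 \<le> 1" using \<gamma> by simp_all
  have "0 \<le> ln (2 / \<gamma>) * (\<Sum>i<n. 1 / real (T i)) / (2 * (real n)\<^sup>2)"
    using \<gamma> by (simp add: sum_nonneg)
  then have \<epsilon>: "sqrt (ln (1 / (\<gamma> / 2)) / (2 * real n)) \<le> conf_bound n T \<gamma>"
    by (simp add: conf_bound_def)
  have weaker: "1 - 2 * \<gamma> \<le> 1 - \<gamma> / 2" using \<gamma> by simp
  show ?thesis
    by (intro conjI order_trans[OF weaker] coverage_lower_confidence_bound[OF J Px _ n T \<delta> \<epsilon>]
        c1_meas c2_meas)
qed

end
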